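(* Let ${\tt l}_1,{\tt l}_2,{\tt r},L,w$ be positive integers. The spatially coupled two edge type LDPC ensemble $\{{\tt l}_1,{\tt l}_2,{\tt r},{\tt r},L,w\}$ (i.e. with both check degrees equal to ${\tt r}$) has the same belief-propagation (BP) threshold for transmission over the binary erasure channel as the (one edge type) spatially coupled ensemble $({\tt l}_1+{\tt l}_2,{\tt r},L,w)$.
   Context: BEC($\epsilon$) denotes the binary erasure channel with erasure probability $\epsilon$. Spatially coupled two edge type ensemble $\{{\tt l}_1,{\tt l}_2,{\tt r}_1,{\tt r}_2,L,w\}$: there are $M$ variable nodes at each position $i\in[-L,L]$ (blocklength $n=M(2L+1)$); every variable node has ${\tt l}_1$ edges of type 1 and ${\tt l}_2$ edges of type 2; edges of type $j$ connect only to check nodes of type $j$, which have degree ${\tt r}_j$, with $\frac{{\tt l}_j}{{\tt r}_j}M$ type-$j$ check nodes per position (check positions range over $[-L,L+w-1]$, check nodes near the boundary having fewer connections). Each of the ${\tt l}_j$ type-$j$ edges of a variable node at position $i$ is connected to a type-$j$ check node at position $i+c$, where the offsets $c\in\{0,\dots,w-1\}$ are assigned so that the empirical distribution of the offset tuples of the variable nodes at each position matches the uniform distribution over $\{0,\dots,w-1\}^{{\tt l}_j}$ (with $M$ chosen to make all counts integers, and a uniformly random permutation mapping the counts to ordered tuples); at each check position, the incoming type-$j$ edge sockets are distributed among the type-$j$ check nodes by a uniformly random permutation. Multiple edges are allowed. The ensemble $({\tt l},{\tt r},L,w)$ is the same construction with a single edge type (each variable node has ${\tt l}$ edges, check nodes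 have degree ${\tt r}$, $\frac{{\tt l}}{{\tt r}}M$ check nodes per position). The BP threshold of an ensemble (for fixed $L,w$) is the supremum of $\epsilon$ such that, for transmission over BEC($\epsilon$) and iterative (BP) decoding, the expected fraction of erased bits after $\ell$ iterations, in the limit $M\to\infty$ followed by $\ell\to\infty$, equals zero (equivalently, density evolution converges to zero erasure probability at all positions). *)

theory Defs
  imports Complex_Main
begin

text \<open>Variable positions are -L..L; messages from positions outside this range are
known (erasure probability 0), which models the boundary check nodes having
fewer connections.\<close>

definition restr :: "nat \<Rightarrow> (int \<Rightarrow> real) \<Rightarrow> int \<Rightarrow> real" where
  "restr L x i = (if - int L \<le> i \<and> i \<le> int L then x i else 0)"

text \<open>Erasure probability of a check-to-variable message (edge type with check
degree r) arriving at a variable node at position i, given the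
variable-to-check erasure probabilities x of that edge type.\<close>
definition chk :: "nat \<Rightarrow> nat \<Rightarrow> nat \<Rightarrow> (int \<Rightarrow> real) \<Rightarrow> int \<Rightarrow> real" where
  "chk L w r x i = (1 / real w) * (\<Sum>a<w. 1 - (1 - (1 / real w) *
      (\<Sum>k<w. restr L x (i + int a - int k))) ^ (r - 1))"

text \<open>One edge type ensemble (l,r,L,w): variable-to-check erasure probabilities.\<close>
primrec de1 :: "nat \<Rightarrow> nat \<Rightarrow> nat \<Rightarrow> nat \<Rightarrow> real \<Rightarrow> nat \<Rightarrow> int \<Rightarrow> real" where
  "de1 l r L w eps 0 = (\<lambda>i. eps)"
| "de1 l r L w eps (Suc n) = (\<lambda>i. eps * chk L w r (de1 l r L w eps n) i ^ (l - 1))"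

definition bit1 :: "nat \<Rightarrow> nat \<Rightarrow> nat \<Rightarrow> nat \<Rightarrow> real \<Rightarrow> nat \<Rightarrow> int \<Rightarrow> real" where
  "bit1 l r L w eps n i = eps * chk L w r (de1 l r L w eps n) i ^ l"

definition bp_success1 :: "nat \<Rightarrow> nat \<Rightarrow> nat \<Rightarrow> nat \<Rightarrow> real \<Rightarrow> bool" where
  "bp_success1 l r L w eps \<longleftrightarrow>
     (\<forall>i. - int L \<le> i \<and> i \<le> int L \<longrightarrow> (\<lambda>n. bit1 l r L w eps n i) \<longlonglongrightarrow> 0)"

definition bp_threshold1 :: "nat \<Rightarrow> nat \<Rightarrow> nat \<Rightarrow> nat \<Rightarrow> real" where
  "bp_threshold1 l r L w = Sup {eps. 0 \<le> eps \<and> eps \<le> 1 \<and> bp_success1 l r L w eps}"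

text \<open>Two edge type ensemble {l1,l2,r1,r2,L,w}: pair of variable-to-check
erasure probabilities (type 1, type 2).\<close>
primrec de2 :: "nat \<Rightarrow> nat \<Rightarrow> nat \<Rightarrow> nat \<Rightarrow> nat \<Rightarrow> nat \<Rightarrow> real \<Rightarrow> nat
                  \<Rightarrow> (int \<Rightarrow> real) \<times> (int \<Rightarrow> real)" where
  "de2 l1 l2 r1 r2 L w eps 0 = (\<lambda>i. eps, \<lambda>i. eps)"
| "de2 l1 l2 r1 r2 L w eps (Suc n) =
     (let y1 = chk L w r1 (fst (de2 l1 l2 r1 r2 L w eps n));
          y2 = chk L w r2 (snd (de2 l1 l2 r1 r2 L w eps n))
      in (\<lambda>i. eps * y1 i ^ (l1 - 1) * y2 i ^ l2,
          \<lambda>i. eps * y1 i ^ l1 * y2 i ^ (l2 - 1)))"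

definition bit2 :: "nat \<Rightarrow> nat \<Rightarrow> nat \<Rightarrow> nat \<Rightarrow> nat \<Rightarrow> nat \<Rightarrow> real \<Rightarrow> nat \<Rightarrow> int \<Rightarrow> real" where
  "bit2 l1 l2 r1 r2 L w eps n i =
     eps * chk L w r1 (fst (de2 l1 l2 r1 r2 L w eps n)) i ^ l1
         * chk L w r2 (snd (de2 l1 l2 r1 r2 L w eps n)) i ^ l2"

definition bp_success2 :: "nat \<Rightarrow> nat \<Rightarrow> nat \<Rightarrow> nat \<Rightarrow> nat \<Rightarrow> nat \<Rightarrow> real \<Rightarrow> bool" where
  "bp_success2 l1 l2 r1 r2 L w eps \<longleftrightarrow>
     (\<forall>i. - int L \<le> i \<and> i \<le> int L \<longrightarrow> (\<lambda>n. bit2 l1 l2 r1 r2 L w eps n i) \<longlonglongrightarrow> 0)"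

definition bp_threshold2 :: "nat \<Rightarrow> nat \<Rightarrow> nat \<Rightarrow> nat \<Rightarrow> nat \<Rightarrow> nat \<Rightarrow> real" where
  "bp_threshold2 l1 l2 r1 r2 L w =
     Sup {eps. 0 \<le> eps \<and> eps \<le> 1 \<and> bp_success2 l1 l2 r1 r2 L w eps}"

end

theory Submission
  imports Defs
begin

text \<open>When both check degrees equal r, the two edge types start with the same erasure
probability and are updated by the same check-node map, so by induction they carry identical
messages at every iteration. A variable node then multiplies l1 + l2 equal incoming factors,
which is exactly density evolution of the one edge type ensemble of degree l1 + l2; the
thresholds therefore agree because the sets of successful erasure probabilities coincide.\<close>

lemma power_pred_mult_power:
  fixes y :: "'a::monoid_mult"
  assumes "0 < m"
  shows "y ^ (m - 1) * y ^ n = y ^ (m + n - 1)"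
  using assms by (simp flip: power_add)

lemma de2_equal_check_degrees:
  assumes "0 < l1" "0 < l2"
  shows "de2 l1 l2 r r L w eps n = (de1 (l1 + l2) r L w eps n, de1 (l1 + l2) r L w eps n)"
proof (induction n)
  case 0
  show ?case by simp
next
  case (Suc n)
  have "y ^ (l1 - 1) * y ^ l2 = y ^ (l1 + l2 - 1)" for y :: real
    using power_pred_mult_power[OF assms(1)] .
  moreover have "y ^ l1 * y ^ (l2 - 1) = y ^ (l1 + l2 - 1)" for y :: real
    using power_pred_mult_power[OF assms(2), of y l1] by (simp add: mult.commute add.commute)
  ultimately show ?case by (simp add: Suc Let_def mult.assoc)
qed

lemma bit2_equal_check_degrees:
  assumes "0 < l1" "0 < l2"
  shows "bit2 l1 l2 r r L w eps n i = bit1 (l1 + l2) r L w eps n i"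
  unfolding bit2_def bit1_def de2_equal_check_degrees[OF assms]
  by (simp add: power_add mult.assoc)

lemma bp_success2_equal_check_degrees:
  assumes "0 < l1" "0 < l2"
  shows "bp_success2 l1 l2 r r L w eps \<longleftrightarrow> bp_success1 (l1 + l2) r L w eps"
  unfolding bp_success2_def bp_success1_def bit2_equal_check_degrees[OF assms] ..

theorem lemma1:
  fixes l1 l2 r L w :: nat
  assumes "0 < l1" "0 < l2" "0 < r" "0 < L" "0 < w"
  shows "bp_threshold2 l1 l2 r r L w = bp_threshold1 (l1 + l2) r L w"
  unfolding bp_threshold2_def bp_threshold1_def
    bp_success2_equal_check_degrees[OF assms(1,2)] ..

end
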